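(* Let $X=(X_1,\ldots,X_q)^T$ be a vector of mutually independent Poisson random variables with positive means $\lambda=(\lambda_1,\ldots,\lambda_q)^T$. Let $A \in \{0,1\}^{\ell\times q}$ have pairwise distinct nonzero columns, let $Y=AX$, and let $K_Y(t)=\log E[e^{t^TY}]$. Let $\mathcal B=\{0,1\}^\ell$, $\mathcal B_0=\mathcal B\setminus\{0\}$, with the componentwise order $\le$; let $\mathcal A\subseteq\mathcal B_0$ be the set of columns of $A$ and $\rho(a_{*,j})=\lambda_j$, $\rho(v)=0$ for $v\notin\mathcal A$. For $v\in\mathcal B_0$ with support $\{i_1<\cdots<i_p\}$ let $\phi(v)=\frac{\partial^p}{\partial t_{i_1}\cdots\partial t_{i_p}}K_Y(t)\big|_{t=0}$. For $v\in\mathcal B$, a successor of $v$ is $w\in\mathcal B_0$ with $v<w$ and no $z\in\mathcal B_0$ with $v<z<w$; write $\rightarrow v$ for the set of successors. Run the following algorithm: (1) set $\mathcal Q=(0,\ldots,0)^T$ (a FIFO queue containing the zero vector) and $\mathcal V=\varnothing$; (2) remove the first element $v$ from $\mathcal Q$; (3) for each $w\in\rightarrow v$ with $\phi(w)>0$ that is not already the first component of a pair in $\mathcal V$, append $w$ to $\mathcal Q$ and add $(w,\phi(w))$ to $\mathcal V$; (4) if $\mathcal Q\neq\varnothing$ go to (2), otherwise stop. At termination write $\mathcal V=\{(w_1,\phi(w_1)),\ldots,(w_k,\phi(w_k))\}$, $\mathcal S=(w_1,\ldots,w_k)$, let $M_{\mathcal S}\in\{0,1\}^{k\times k}$ be given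 by $(M_{\mathcal S})_{i,j}=1$ iff $w_i\le w_j$, define $(\psi(w_1),\ldots,\psi(w_k))^T = M_{\mathcal S}^{-1}(\phi(w_1),\ldots,\phi(w_k))^T$, and $\hat{\mathcal A}=\{w_i:\psi(w_i)>0\}$. Then: (1) $\mathcal V=\{(w,\phi(w)) : w\in\mathcal B_0,\ \phi(w)>0\}$; (2) $\hat{\mathcal A}=\mathcal A$ and $\psi(v)=\rho(v)$ for every $v\in\mathcal A$.
   Context: $a_{*,j}$ is the $j$-th column of $A$; $w<v$ means $w\le v$ and $w\ne v$ in the componentwise order. $M_{\mathcal S}$ is invertible since the $w_i$ are distinct. *)

theory Defs
  imports "HOL-Probability.Probability" "Jordan_Normal_Form.Gauss_Jordan_Elimination"
begin

text \<open>Binary vectors of length l are represented as functions nat \<Rightarrow> nat with values in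
  {0,1} on {..<l} and value 0 outside {..<l}.\<close>

definition binvecs :: "nat \<Rightarrow> (nat \<Rightarrow> nat) set" where
  "binvecs l = {v. (\<forall>i<l. v i \<in> {0,1}) \<and> (\<forall>i\<ge>l. v i = 0)}"

definition binvecs0 :: "nat \<Rightarrow> (nat \<Rightarrow> nat) set" where
  "binvecs0 l = binvecs l - {(\<lambda>_. 0)}"

definition col :: "nat \<Rightarrow> (nat \<Rightarrow> nat \<Rightarrow> nat) \<Rightarrow> nat \<Rightarrow> (nat \<Rightarrow> nat)" where
  "col l A j = (\<lambda>i. if i < l then A i j else 0)"

definition colset :: "nat \<Rightarrow> nat \<Rightarrow> (nat \<Rightarrow> nat \<Rightarrow> nat) \<Rightarrow> (nat \<Rightarrow> nat) set" where
  "colset l q A = col l A ` {..<q}"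

definition rho :: "nat \<Rightarrow> nat \<Rightarrow> (nat \<Rightarrow> nat \<Rightarrow> nat) \<Rightarrow> (nat \<Rightarrow> real) \<Rightarrow> (nat \<Rightarrow> nat) \<Rightarrow> real" where
  "rho l q A lam v = (if \<exists>j<q. col l A j = v then lam (THE j. j < q \<and> col l A j = v) else 0)"

definition Yvec :: "nat \<Rightarrow> (nat \<Rightarrow> nat \<Rightarrow> nat) \<Rightarrow> (nat \<Rightarrow> 'a \<Rightarrow> nat) \<Rightarrow> nat \<Rightarrow> 'a \<Rightarrow> nat" where
  "Yvec q A X i \<omega> = (\<Sum>j<q. A i j * X j \<omega>)"

definition cgf :: "'a measure \<Rightarrow> nat \<Rightarrow> (nat \<Rightarrow> 'a \<Rightarrow> nat) \<Rightarrow> (nat \<Rightarrow> real) \<Rightarrow> real" where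
  "cgf M l Y t = ln (\<integral>\<omega>. exp (\<Sum>i<l. t i * real (Y i \<omega>)) \<partial>M)"

definition partial :: "nat \<Rightarrow> ((nat \<Rightarrow> real) \<Rightarrow> real) \<Rightarrow> (nat \<Rightarrow> real) \<Rightarrow> real" where
  "partial i f = (\<lambda>t. deriv (\<lambda>s. f (t(i := s))) (t i))"

definition supp :: "nat \<Rightarrow> (nat \<Rightarrow> nat) \<Rightarrow> nat set" where
  "supp l v = {i. i < l \<and> v i \<noteq> 0}"

definition phi :: "'a measure \<Rightarrow> nat \<Rightarrow> (nat \<Rightarrow> 'a \<Rightarrow> nat) \<Rightarrow> (nat \<Rightarrow> nat) \<Rightarrow> real" where
  "phi M l Y v = foldr partial (sorted_list_of_set (supp l v)) (cgf M l Y) (\<lambda>_. 0)"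

definition succs :: "nat \<Rightarrow> (nat \<Rightarrow> nat) \<Rightarrow> (nat \<Rightarrow> nat) set" where
  "succs l v = {w \<in> binvecs0 l. v < w \<and> \<not> (\<exists>z \<in> binvecs0 l. v < z \<and> z < w)}"

text \<open>The order in which the successors are visited in step (3) is not
  specified, so it is chosen nondeterministically (ws is any enumeration of the new vertices).\<close>
inductive alg_step :: "nat \<Rightarrow> ((nat \<Rightarrow> nat) \<Rightarrow> real) \<Rightarrow>
    (nat \<Rightarrow> nat) list \<times> ((nat \<Rightarrow> nat) \<times> real) list \<Rightarrow>
    (nat \<Rightarrow> nat) list \<times> ((nat \<Rightarrow> nat) \<times> real) list \<Rightarrow> bool"
  for l :: nat and ph :: "(nat \<Rightarrow> nat) \<Rightarrow> real" where
  "distinct ws \<Longrightarrow>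
   set ws = {w \<in> succs l v. ph w > 0 \<and> w \<notin> fst ` set V} \<Longrightarrow>
   alg_step l ph (v # Q, V) (Q @ ws, V @ map (\<lambda>w. (w, ph w)) ws)"

definition alg_result :: "nat \<Rightarrow> ((nat \<Rightarrow> nat) \<Rightarrow> real) \<Rightarrow> ((nat \<Rightarrow> nat) \<times> real) list \<Rightarrow> bool" where
  "alg_result l ph V \<longleftrightarrow> (alg_step l ph)\<^sup>*\<^sup>* ([\<lambda>_. 0], []) ([], V)"

definition MS :: "(nat \<Rightarrow> nat) list \<Rightarrow> real mat" where
  "MS S = mat (length S) (length S) (\<lambda>(i,j). if S ! i \<le> S ! j then 1 else 0)"

definition psi_vec :: "((nat \<Rightarrow> nat) \<times> real) list \<Rightarrow> real vec" where
  "psi_vec V = the (mat_inverse (MS (map fst V))) *\<^sub>v vec (length V) (\<lambda>i. snd (V ! i))"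

end

theory Submission
  imports Defs "Jordan_Normal_Form.Determinant"
begin

text \<open>For independent Poisson X_j, K_Y(t) = \<Sum>_j \<lambda>_j (exp \<langle>t, a_j\<rangle> - 1).  Each derivative
  in t_i multiplies the j-th term by A i j, so for binary data
  \<phi>(v) = \<Sum>_{j: v \<le> a_j} \<lambda>_j = \<Sum>_{w \<ge> v} \<rho>(w), and {\<phi> > 0} is the down-set generated by
  the columns.  The search moves along covering relations and keeps only positive vertices;
  since every positive w covers the positive vertex obtained by deleting one of its
  coordinates, induction on the size of the support shows that it visits the whole down-set.
  On the visited vertices, which include all columns, the identity \<phi>(v) = \<Sum>_{w \<ge> v} \<rho>(w)
  reads \<phi> = M_S \<rho>, so \<psi> = \<rho>.  M_S is invertible because M_S x = 0 evaluated at a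
  \<le>-maximal index of the support of x gives that entry of x.\<close>

section \<open>The cumulant generating function of Y = A X\<close>

lemma sums_poisson_mgf:
  assumes "0 < r"
  shows "(\<lambda>n. pmf (poisson_pmf r) n * exp (c * real n)) sums exp (r * (exp c - 1))"
proof -
  have "(\<lambda>n. exp (-r) * ((r * exp c) ^ n /\<^sub>R fact n)) sums (exp (-r) * exp (r * exp c))"
    by (intro sums_mult exp_converges)
  moreover have "exp (-r) * exp (r * exp c) = exp (r * (exp c - 1))"
    by (simp add: right_diff_distrib exp_diff exp_minus field_simps)
  moreover have "(\<lambda>n. exp (-r) * ((r * exp c) ^ n /\<^sub>R fact n)) =
      (\<lambda>n. pmf (poisson_pmf r) n * exp (c * real n))"
    using assms by (auto simp: fun_eq_iff power_mult_distrib exp_of_nat_mult[symmetric]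
        mult.commute divide_inverse)
  ultimately show ?thesis by simp
qed

lemma poisson_mgf:
  assumes "0 < r"
  shows "integrable (measure_pmf (poisson_pmf r)) (\<lambda>k. exp (c * real k))"
    and "(\<integral>k. exp (c * real k) \<partial>measure_pmf (poisson_pmf r)) = exp (r * (exp c - 1))"
proof -
  note sums = sums_poisson_mgf[OF assms, of c]
  have int: "integrable (count_space UNIV) (\<lambda>n. pmf (poisson_pmf r) n * exp (c * real n))"
    using sums unfolding integrable_count_space_nat_iff by (simp add: sums_iff abs_mult)
  then show "integrable (measure_pmf (poisson_pmf r)) (\<lambda>k. exp (c * real k))"
    unfolding measure_pmf_eq_density by (subst integrable_density) auto
  have "(\<integral>k. exp (c * real k) \<partial>measure_pmf (poisson_pmf r)) =
      (\<integral>n. pmf (poisson_pmf r) n * exp (c * real n) \<partial>count_space UNIV)"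
    unfolding measure_pmf_eq_density by (subst integral_density) auto
  also have "\<dots> = exp (r * (exp c - 1))"
    using int sums by (subst integral_count_space_nat) (simp_all add: sums_iff)
  finally show "(\<integral>k. exp (c * real k) \<partial>measure_pmf (poisson_pmf r)) = exp (r * (exp c - 1))" .
qed

definition col_inner :: "nat \<Rightarrow> (nat \<Rightarrow> nat \<Rightarrow> nat) \<Rightarrow> nat \<Rightarrow> (nat \<Rightarrow> real) \<Rightarrow> real" where
  "col_inner l A j t = (\<Sum>i<l. t i * real (A i j))"

lemma cgf_Yvec_Poisson:
  fixes M :: "'a measure" and X :: "nat \<Rightarrow> 'a \<Rightarrow> nat" and lam :: "nat \<Rightarrow> real"
  assumes "prob_space M"
    and meas: "\<And>j. j < q \<Longrightarrow> X j \<in> measurable M (count_space UNIV)"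
    and pos: "\<And>j. j < q \<Longrightarrow> lam j > 0"
    and distr: "\<And>j. j < q \<Longrightarrow> distr M (count_space UNIV) (X j) = measure_pmf (poisson_pmf (lam j))"
    and indep: "prob_space.indep_vars M (\<lambda>_. count_space UNIV) X {..<q}"
  shows "cgf M l (Yvec q A X) t = (\<Sum>j<q. lam j * (exp (col_inner l A j t) - 1))"
proof -
  interpret prob_space M by fact
  define Z where "Z j \<omega> = exp (col_inner l A j t * real (X j \<omega>))" for j \<omega>
  have "(\<Sum>i<l. t i * real (Yvec q A X i \<omega>)) = (\<Sum>j<q. col_inner l A j t * real (X j \<omega>))" for \<omega>
    unfolding col_inner_def Yvec_def
    by (simp add: of_nat_sum sum_distrib_left sum_distrib_right mult.assoc sum.swap[of _ "{..<l}"])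
  then have exp_Y: "exp (\<Sum>i<l. t i * real (Yvec q A X i \<omega>)) = (\<Prod>j<q. Z j \<omega>)" for \<omega>
    unfolding Z_def by (simp add: exp_sum)
  have "indep_vars (\<lambda>_. borel) Z {..<q}"
    unfolding Z_def by (rule indep_vars_compose2[OF indep]) auto
  moreover have "integrable M (Z j)" and E_Z: "(\<integral>\<omega>. Z j \<omega> \<partial>M) = exp (lam j * (exp (col_inner l A j t) - 1))"
    if "j < q" for j
  proof -
    note mgf = poisson_mgf[OF pos[OF that], of "col_inner l A j t", folded distr[OF that]]
    show "integrable M (Z j)"
      using mgf(1) unfolding Z_def by (subst (asm) integrable_distr_eq[OF meas[OF that]]) auto
    show "(\<integral>\<omega>. Z j \<omega> \<partial>M) = exp (lam j * (exp (col_inner l A j t) - 1))"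
      using mgf(2) unfolding Z_def by (subst (asm) integral_distr[OF meas[OF that]]) auto
  qed
  ultimately have "(\<integral>\<omega>. (\<Prod>j<q. Z j \<omega>) \<partial>M) = (\<Prod>j<q. \<integral>\<omega>. Z j \<omega> \<partial>M)"
    by (intro indep_vars_lebesgue_integral) auto
  also have "\<dots> = exp (\<Sum>j<q. lam j * (exp (col_inner l A j t) - 1))"
    by (simp add: E_Z exp_sum)
  finally show ?thesis
    unfolding cgf_def exp_Y by simp
qed

section \<open>Mixed partial derivatives of the cumulant generating function\<close>

definition exp_sum :: "nat \<Rightarrow> nat \<Rightarrow> (nat \<Rightarrow> nat \<Rightarrow> nat) \<Rightarrow> (nat \<Rightarrow> real) \<Rightarrow> (nat \<Rightarrow> real) \<Rightarrow> real" where
  "exp_sum l q A c t = (\<Sum>j<q. c j * exp (col_inner l A j t))"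

lemma col_inner_upd:
  assumes "i < l"
  shows "col_inner l A j (t(i := s)) = col_inner l A j t + (s - t i) * real (A i j)"
proof -
  have "col_inner l A j (t(i := s)) = s * real (A i j) + (\<Sum>k\<in>{..<l} - {i}. t k * real (A k j))"
    and "col_inner l A j t = t i * real (A i j) + (\<Sum>k\<in>{..<l} - {i}. t k * real (A k j))"
    unfolding col_inner_def using assms by (subst sum.remove[of _ i]; auto intro!: sum.cong)+
  then show ?thesis by (simp add: algebra_simps)
qed

lemma partial_exp_sum_plus_const:
  assumes "i < l"
  shows "partial i (\<lambda>t. exp_sum l q A c t + C) = exp_sum l q A (\<lambda>j. c j * real (A i j))"
proof
  fix t :: "nat \<Rightarrow> real"
  have "((\<lambda>s. exp_sum l q A c (t(i := s)) + C) has_real_derivative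
      (\<Sum>j<q. c j * (exp (col_inner l A j t + (t i - t i) * real (A i j)) * real (A i j)))) (at (t i))"
    unfolding exp_sum_def col_inner_upd[OF assms]
    by (auto intro!: derivative_eq_intros) (auto intro!: sum.cong simp: ac_simps)
  then show "partial i (\<lambda>t. exp_sum l q A c t + C) t = exp_sum l q A (\<lambda>j. c j * real (A i j)) t"
    unfolding partial_def exp_sum_def by (simp add: DERIV_imp_deriv algebra_simps)
qed

lemma foldr_partial_exp_sum_plus_const:
  assumes "is \<noteq> []" and "set is \<subseteq> {..<l}"
  shows "foldr partial is (\<lambda>t. exp_sum l q A c t + C) =
    exp_sum l q A (\<lambda>j. c j * (\<Prod>i\<leftarrow>is. real (A i j)))"
  using assms
proof (induction "is" rule: list_nonempty_induct)
  case (single i)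
  then show ?case by (simp add: partial_exp_sum_plus_const)
next
  case (cons i "is")
  then have "foldr partial (i # is) (\<lambda>t. exp_sum l q A c t + C) =
      partial i (exp_sum l q A (\<lambda>j. c j * (\<Prod>i\<leftarrow>is. real (A i j))))"
    by simp
  also have "\<dots> = exp_sum l q A (\<lambda>j. c j * (\<Prod>i\<leftarrow>i # is. real (A i j)))"
    using cons.prems partial_exp_sum_plus_const[of i l q A _ 0] by (simp add: ac_simps)
  finally show ?case .
qed

definition weight_above :: "nat \<Rightarrow> nat \<Rightarrow> (nat \<Rightarrow> nat \<Rightarrow> nat) \<Rightarrow> (nat \<Rightarrow> real) \<Rightarrow> (nat \<Rightarrow> nat) \<Rightarrow> real" where
  "weight_above l q A lam v = (\<Sum>j<q. if v \<le> col l A j then lam j else 0)"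

lemma supp_nonempty:
  assumes "v \<in> binvecs0 l"
  shows "supp l v \<noteq> {}"
proof -
  have "v \<noteq> (\<lambda>_. 0)" and v: "v \<in> binvecs l"
    using assms unfolding binvecs0_def by auto
  then obtain i where "v i \<noteq> 0" by (auto simp: fun_eq_iff)
  moreover have "i < l"
  proof (rule ccontr)
    assume "\<not> i < l"
    with v have "v i = 0" unfolding binvecs_def by auto
    with \<open>v i \<noteq> 0\<close> show False by simp
  qed
  ultimately show ?thesis unfolding supp_def by blast
qed

lemma prod_supp_col:
  assumes v: "v \<in> binvecs l" and binary: "\<And>i. i < l \<Longrightarrow> A i j \<in> {0, 1}"
  shows "(\<Prod>i\<in>supp l v. real (A i j)) = (if v \<le> col l A j then 1 else 0)"
proof (cases "v \<le> col l A j")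
  case True
  have "A i j = 1" if "i \<in> supp l v" for i
  proof -
    from that have "i < l" and "v i \<noteq> 0" unfolding supp_def by auto
    moreover from True have "v i \<le> col l A j i" by (simp add: le_fun_def)
    ultimately show ?thesis using binary[of i] by (auto simp: col_def)
  qed
  then show ?thesis using True by simp
next
  case False
  then obtain i where i: "\<not> v i \<le> col l A j i" unfolding le_fun_def by blast
  have "i < l"
  proof (rule ccontr)
    assume "\<not> i < l"
    then have "v i = 0" using v unfolding binvecs_def by auto
    with i show False by simp
  qed
  with v have "v i \<in> {0, 1}" unfolding binvecs_def by auto
  with i \<open>i < l\<close> binary[of i] have "i \<in> supp l v" and "A i j = 0"
    unfolding supp_def col_def by auto
  moreover have "finite (supp l v)" unfolding supp_def by auto
  ultimately have "(\<Prod>i\<in>supp l v. real (A i j)) = 0"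
    by (intro prod_zero) auto
  with False show ?thesis by simp
qed

lemma phi_Yvec_Poisson:
  fixes M :: "'a measure" and X :: "nat \<Rightarrow> 'a \<Rightarrow> nat" and lam :: "nat \<Rightarrow> real"
  assumes "prob_space M"
    and "\<And>j. j < q \<Longrightarrow> X j \<in> measurable M (count_space UNIV)"
    and "\<And>j. j < q \<Longrightarrow> lam j > 0"
    and "\<And>j. j < q \<Longrightarrow> distr M (count_space UNIV) (X j) = measure_pmf (poisson_pmf (lam j))"
    and "prob_space.indep_vars M (\<lambda>_. count_space UNIV) X {..<q}"
    and binary: "\<And>i j. i < l \<Longrightarrow> j < q \<Longrightarrow> A i j \<in> {0, 1}"
    and v: "v \<in> binvecs0 l"
  shows "phi M l (Yvec q A X) v = weight_above l q A lam v"
proof -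
  define "is" where "is = sorted_list_of_set (supp l v)"
  have "finite (supp l v)" unfolding supp_def by auto
  then have set_is: "set is = supp l v"
    unfolding is_def by (rule set_sorted_list_of_set)
  have "distinct is"
    unfolding is_def by (rule distinct_sorted_list_of_set)
  have "is \<noteq> []"
    using supp_nonempty[OF v] set_is by auto
  have "set is \<subseteq> {..<l}"
    unfolding set_is supp_def by auto
  have cgf: "cgf M l (Yvec q A X) = (\<lambda>t. exp_sum l q A lam t + - (\<Sum>j<q. lam j))"
    using cgf_Yvec_Poisson[OF assms(1-5)]
    by (simp add: fun_eq_iff exp_sum_def right_diff_distrib sum_subtractf)
  have "phi M l (Yvec q A X) v = foldr partial is (\<lambda>t. exp_sum l q A lam t + - (\<Sum>j<q. lam j))
      (\<lambda>_. 0)"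
    unfolding phi_def is_def[symmetric] cgf ..
  also have "\<dots> = exp_sum l q A (\<lambda>j. lam j * (\<Prod>i\<leftarrow>is. real (A i j))) (\<lambda>_. 0)"
    by (simp only: foldr_partial_exp_sum_plus_const[OF \<open>is \<noteq> []\<close> \<open>set is \<subseteq> {..<l}\<close>])
  also have "\<dots> = (\<Sum>j<q. lam j * (\<Prod>i\<in>supp l v. real (A i j)))"
    unfolding exp_sum_def col_inner_def set_is[symmetric]
    by (simp add: prod.distinct_set_conv_list[OF \<open>distinct is\<close>])
  also have "\<dots> = weight_above l q A lam v"
    unfolding weight_above_def
    using v binary by (intro sum.cong refl) (simp add: prod_supp_col binvecs0_def)
  finally show ?thesis .
qed

section \<open>The breadth-first search\<close>

lemma finite_binvecs: "finite (binvecs l)"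
proof (rule finite_subset)
  show "binvecs l \<subseteq> {v. \<forall>i. (i \<in> {..<l} \<longrightarrow> v i \<in> {0, 1}) \<and> (i \<notin> {..<l} \<longrightarrow> v i = 0)}"
    unfolding binvecs_def by auto
qed (intro finite_set_of_finite_funs; simp)

lemma finite_binvecs0: "finite (binvecs0 l)"
  unfolding binvecs0_def using finite_binvecs by simp

lemma succs_subset_binvecs0: "succs l v \<subseteq> binvecs0 l"
  unfolding succs_def by blast

lemma succs_upd_zero:
  assumes w: "w \<in> binvecs0 l" and "i < l" and "w i \<noteq> 0"
  shows "w \<in> succs l (w(i := 0))"
proof -
  have wi: "w i = 1" using w assms(2,3) unfolding binvecs0_def binvecs_def by auto
  then have lt: "w(i := 0) < w" by (auto simp: less_fun_def le_fun_def fun_eq_iff)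
  have "z = w(i := 0) \<or> z = w" if z: "z \<in> binvecs l" "w(i := 0) \<le> z" "z \<le> w" for z
  proof -
    have "z k = w k" if "k \<noteq> i" for k
      using z(2,3) that unfolding le_fun_def by (metis antisym fun_upd_other)
    then have "z = w(i := z i)" by (auto simp: fun_eq_iff)
    moreover have "z i \<in> {0, 1}" using z(1) assms(2) unfolding binvecs_def by auto
    ultimately show ?thesis using wi fun_upd_idem[of w i 1] by auto
  qed
  then have "\<not> (\<exists>z \<in> binvecs0 l. w(i := 0) < z \<and> z < w)"
    unfolding binvecs0_def less_le by blast
  then show ?thesis
    using w lt unfolding succs_def by blast
qed

fun bfs_invariant :: "nat \<Rightarrow> ((nat \<Rightarrow> nat) \<Rightarrow> real) \<Rightarrow>
    (nat \<Rightarrow> nat) list \<times> ((nat \<Rightarrow> nat) \<times> real) list \<Rightarrow> bool" where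
  "bfs_invariant l ph (Q, V) \<longleftrightarrow>
     distinct (map fst V) \<and> (\<forall>p\<in>set V. snd p = ph (fst p)) \<and>
     fst ` set V \<subseteq> {w \<in> binvecs0 l. ph w > 0} \<and>
     set Q \<subseteq> insert (\<lambda>_. 0) (fst ` set V) \<and>
     (\<forall>u \<in> insert (\<lambda>_. 0) (fst ` set V) - set Q. {w \<in> succs l u. ph w > 0} \<subseteq> fst ` set V)"

lemma bfs_invariant_step:
  assumes "alg_step l ph s s'" and "bfs_invariant l ph s"
  shows "bfs_invariant l ph s'"
  using assms
proof cases
  case (1 ws v V Q)
  let ?W = "fst ` set V"
  have new: "set ws = {w \<in> succs l v. ph w > 0 \<and> w \<notin> ?W}" by fact
  have "bfs_invariant l ph (v # Q, V)" using 1 assms(2) by simp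
  then have distinct_V: "distinct (map fst V)" and stored: "\<forall>p\<in>set V. snd p = ph (fst p)"
    and visited: "?W \<subseteq> {w \<in> binvecs0 l. ph w > 0}" and queue: "set (v # Q) \<subseteq> insert (\<lambda>_. 0) ?W"
    and closed: "\<forall>u \<in> insert (\<lambda>_. 0) ?W - set (v # Q). {w \<in> succs l u. ph w > 0} \<subseteq> ?W"
    by simp_all
  have "fst ` set (V @ map (\<lambda>w. (w, ph w)) ws) = ?W \<union> set ws"
    by (simp add: image_Un image_image)
  moreover have "distinct (map fst (V @ map (\<lambda>w. (w, ph w)) ws))"
    using distinct_V \<open>distinct ws\<close> new by (simp add: comp_def) blast
  moreover have "\<forall>p\<in>set (V @ map (\<lambda>w. (w, ph w)) ws). snd p = ph (fst p)"
    using stored by auto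
  moreover have "?W \<union> set ws \<subseteq> {w \<in> binvecs0 l. ph w > 0}"
    using visited new succs_subset_binvecs0 by blast
  moreover have "set (Q @ ws) \<subseteq> insert (\<lambda>_. 0) (?W \<union> set ws)"
    using queue by auto
  moreover have "\<forall>u \<in> insert (\<lambda>_. 0) (?W \<union> set ws) - set (Q @ ws).
      {w \<in> succs l u. ph w > 0} \<subseteq> ?W \<union> set ws"
  proof
    fix u assume u: "u \<in> insert (\<lambda>_. 0) (?W \<union> set ws) - set (Q @ ws)"
    show "{w \<in> succs l u. ph w > 0} \<subseteq> ?W \<union> set ws"
    proof (cases "u = v")
      case True
      then show ?thesis using new by blast
    next
      case False
      with u have "u \<in> insert (\<lambda>_. 0) ?W - set (v # Q)" by auto
      with closed show ?thesis by blast
    qed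
  qed
  ultimately show ?thesis
    unfolding 1(2) bfs_invariant.simps by (intro conjI) simp_all
qed

lemma bfs_invariant_run:
  "(alg_step l ph)\<^sup>*\<^sup>* ([\<lambda>_. 0], []) s \<Longrightarrow> bfs_invariant l ph s"
  by (induction rule: rtranclp_induct) (auto intro: bfs_invariant_step)

lemma bfs_invariant_length_le:
  assumes "bfs_invariant l ph (Q, V)"
  shows "length V \<le> card (binvecs0 l)"
proof -
  have "length V = card (fst ` set V)"
    using assms distinct_card[of "map fst V"] by simp
  also have "\<dots> \<le> card (binvecs0 l)"
    using assms finite_binvecs0 by (intro card_mono) auto
  finally show ?thesis .
qed

text \<open>Each step either enlarges V (at most card B0 times) or shortens Q.\<close>
lemma bfs_terminates:
  "bfs_invariant l ph (Q, V) \<Longrightarrow> \<exists>V'. (alg_step l ph)\<^sup>*\<^sup>* (Q, V) ([], V')"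
proof (induction "2 * (card (binvecs0 l) - length V) + length Q" arbitrary: Q V rule: less_induct)
  case less
  show ?case
  proof (cases Q)
    case Nil
    then show ?thesis by blast
  next
    case (Cons v Q')
    let ?new = "{w \<in> succs l v. ph w > 0 \<and> w \<notin> fst ` set V}"
    have "?new \<subseteq> binvecs0 l"
      using succs_subset_binvecs0[of l v] by auto
    then have "finite ?new"
      using finite_binvecs0 by (rule finite_subset)
    then obtain ws where ws: "set ws = ?new" "distinct ws"
      by (meson finite_distinct_list)
    let ?V' = "V @ map (\<lambda>w. (w, ph w)) ws"
    have step: "alg_step l ph (v # Q', V) (Q' @ ws, ?V')"
      using ws by (intro alg_step.intros)
    have inv: "bfs_invariant l ph (Q' @ ws, ?V')"
      using step less.prems unfolding Cons by (rule bfs_invariant_step)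
    then have "length ?V' \<le> card (binvecs0 l)"
      by (rule bfs_invariant_length_le)
    then have "2 * (card (binvecs0 l) - length ?V') + length (Q' @ ws) <
        2 * (card (binvecs0 l) - length V) + length Q"
      unfolding Cons by simp
    then obtain V' where "(alg_step l ph)\<^sup>*\<^sup>* (Q' @ ws, ?V') ([], V')"
      using less.hyps[OF _ inv] by blast
    with step show ?thesis
      unfolding Cons by (blast intro: converse_rtranclp_into_rtranclp)
  qed
qed

lemma alg_result_exists: "\<exists>V. alg_result l ph V"
  unfolding alg_result_def by (rule bfs_terminates) simp

lemma succs_closed_contains_positive:
  assumes closed: "\<forall>u \<in> insert (\<lambda>_. 0) W. {w \<in> succs l u. ph w > 0} \<subseteq> W"
    and down: "\<And>u w. u \<in> binvecs0 l \<Longrightarrow> w \<in> binvecs0 l \<Longrightarrow> u \<le> w \<Longrightarrow> ph w > 0 \<Longrightarrow> ph u > 0"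
    and "w \<in> binvecs0 l" and "ph w > 0"
  shows "w \<in> W"
  using assms(3,4)
proof (induction "card (supp l w)" arbitrary: w)
  case 0
  then show ?case
    using supp_nonempty[of w l] by (simp add: supp_def)
next
  case (Suc n)
  then obtain i where i: "i < l" "w i \<noteq> 0"
    using supp_nonempty unfolding supp_def by blast
  let ?u = "w(i := 0)"
  have "?u \<in> insert (\<lambda>_. 0) W"
  proof (cases "?u = (\<lambda>_. 0)")
    case False
    then have u: "?u \<in> binvecs0 l"
      using Suc.prems(1) unfolding binvecs0_def binvecs_def by auto
    moreover have "supp l ?u = supp l w - {i}" and "finite (supp l w)" and "i \<in> supp l w"
      using i unfolding supp_def by auto
    then have "n = card (supp l ?u)"
      using Suc.hyps(2) by (simp add: card_Diff_singleton)
    moreover have "ph ?u > 0"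
      using down[OF u Suc.prems(1) _ Suc.prems(2)] by (simp add: le_fun_def)
    ultimately show ?thesis using Suc.hyps(1) by blast
  qed simp
  then show ?case
    using closed succs_upd_zero[OF Suc.prems(1) i] Suc.prems(2) by blast
qed

lemma alg_result_set:
  assumes "alg_result l ph V"
    and down: "\<And>u w. u \<in> binvecs0 l \<Longrightarrow> w \<in> binvecs0 l \<Longrightarrow> u \<le> w \<Longrightarrow> ph w > 0 \<Longrightarrow> ph u > 0"
  shows "set V = {(w, ph w) | w. w \<in> binvecs0 l \<and> ph w > 0}" and "distinct (map fst V)"
proof -
  have inv: "bfs_invariant l ph ([], V)"
    using assms(1) unfolding alg_result_def by (rule bfs_invariant_run)
  have positive: "w \<in> fst ` set V" if "w \<in> binvecs0 l" "ph w > 0" for w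
  proof (rule succs_closed_contains_positive)
    show "\<forall>u \<in> insert (\<lambda>_. 0) (fst ` set V). {w \<in> succs l u. ph w > 0} \<subseteq> fst ` set V"
      using inv by simp
  qed (use down that in auto)
  show "set V = {(w, ph w) | w. w \<in> binvecs0 l \<and> ph w > 0}"
  proof
    show "set V \<subseteq> {(w, ph w) | w. w \<in> binvecs0 l \<and> ph w > 0}"
    proof
      fix p assume p: "p \<in> set V"
      with inv have "snd p = ph (fst p)" and "fst p \<in> binvecs0 l" and "ph (fst p) > 0"
        by auto
      then show "p \<in> {(w, ph w) | w. w \<in> binvecs0 l \<and> ph w > 0}"
        by (metis (mono_tags, lifting) mem_Collect_eq prod.collapse)
    qed
    show "{(w, ph w) | w. w \<in> binvecs0 l \<and> ph w > 0} \<subseteq> set V"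
    proof
      fix p assume "p \<in> {(w, ph w) | w. w \<in> binvecs0 l \<and> ph w > 0}"
      then obtain w where p: "p = (w, ph w)" "w \<in> binvecs0 l" "ph w > 0" by blast
      then obtain x where "(w, x) \<in> set V" using positive by force
      with inv p(1) show "p \<in> set V" by auto
    qed
  qed
  show "distinct (map fst V)" using inv by simp
qed

section \<open>Inverting the incidence matrix of the order\<close>

lemma MS_carrier: "MS S \<in> carrier_mat (length S) (length S)"
  unfolding MS_def by simp

lemma MS_mult_vec_nth:
  assumes "x \<in> carrier_vec (length S)" and "k < length S"
  shows "(MS S *\<^sub>v x) $ k = (\<Sum>i<length S. if S ! k \<le> S ! i then x $ i else 0)"
proof -
  have "(MS S *\<^sub>v x) $ k = row (MS S) k \<bullet> x"
    using assms(2) by (simp add: MS_def)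
  also have "\<dots> = (\<Sum>i\<in>{0..<length S}. row (MS S) k $ i * x $ i)"
    using assms(1) unfolding scalar_prod_def by simp
  also have "\<dots> = (\<Sum>i<length S. if S ! k \<le> S ! i then x $ i else 0)"
    using assms(2) by (auto simp: atLeast0LessThan MS_def intro!: sum.cong)
  finally show ?thesis .
qed

lemma MS_mult_vec_eq_0_imp:
  assumes "distinct S" and x: "x \<in> carrier_vec (length S)" and "MS S *\<^sub>v x = 0\<^sub>v (length S)"
  shows "x = 0\<^sub>v (length S)"
proof (rule ccontr)
  assume "x \<noteq> 0\<^sub>v (length S)"
  then obtain k0 where "k0 < length S" "x $ k0 \<noteq> 0"
    using x by (metis carrier_vecD eq_vecI index_zero_vec)
  then obtain k where k: "k < length S" "x $ k \<noteq> 0"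
    and max: "\<And>i. i < length S \<Longrightarrow> x $ i \<noteq> 0 \<Longrightarrow> S ! k \<le> S ! i \<Longrightarrow> S ! k = S ! i"
    using finite_has_maximal2[of "(!) S ` {i. i < length S \<and> x $ i \<noteq> 0}" "S ! k0"] by force
  have "(\<Sum>i<length S. if S ! k \<le> S ! i then x $ i else 0) = (\<Sum>i<length S. if i = k then x $ k else 0)"
    using max k(1) \<open>distinct S\<close> by (intro sum.cong refl) (auto simp: nth_eq_iff_index_eq)
  then have "(MS S *\<^sub>v x) $ k = x $ k"
    using MS_mult_vec_nth[OF x k(1)] k(1) by simp
  then show False using assms(3) k by simp
qed

lemma MS_inverse:
  assumes "distinct S"
  shows "the (mat_inverse (MS S)) * MS S = 1\<^sub>m (length S)"
    and "the (mat_inverse (MS S)) \<in> carrier_mat (length S) (length S)"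
proof -
  have "det (MS S) \<noteq> 0"
    using MS_mult_vec_eq_0_imp[OF assms] det_0_iff_vec_prod_zero_field[OF MS_carrier] by blast
  then have "MS S \<in> Units (ring_mat TYPE(real) (length S) ())"
    by (rule det_non_zero_imp_unit[OF MS_carrier])
  then obtain B where "mat_inverse (MS S) = Some B"
    using mat_inverse(1)[OF MS_carrier] by fastforce
  then show "the (mat_inverse (MS S)) * MS S = 1\<^sub>m (length S)"
    and "the (mat_inverse (MS S)) \<in> carrier_mat (length S) (length S)"
    using mat_inverse(2)[OF MS_carrier] by auto
qed

lemma psi_vec_eq:
  assumes "distinct (map fst V)" and r: "r \<in> carrier_vec (length V)"
    and phi: "\<And>i. i < length V \<Longrightarrow>
      snd (V ! i) = (\<Sum>k<length V. if fst (V ! i) \<le> fst (V ! k) then r $ k else 0)"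
  shows "psi_vec V = r"
proof -
  let ?S = "map fst V"
  have "vec (length V) (\<lambda>i. snd (V ! i)) = MS ?S *\<^sub>v r"
    using MS_mult_vec_nth[of r ?S] r phi by (intro eq_vecI) (auto simp: MS_def)
  then have "psi_vec V = (the (mat_inverse (MS ?S)) * MS ?S) *\<^sub>v r"
    unfolding psi_vec_def using MS_inverse(2)[OF assms(1)] MS_carrier r
    by (metis assoc_mult_mat_vec length_map)
  then show ?thesis
    using MS_inverse(1)[OF assms(1)] r by simp
qed

section \<open>Recovering the columns\<close>

lemma col_in_binvecs0:
  assumes "\<And>i. i < l \<Longrightarrow> A i j \<in> {0, 1}" and "col l A j \<noteq> (\<lambda>_. 0)"
  shows "col l A j \<in> binvecs0 l"
  using assms unfolding binvecs0_def binvecs_def col_def by auto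

lemma rho_col:
  assumes "inj_on (col l A) {..<q}" and "j < q"
  shows "rho l q A lam (col l A j) = lam j"
proof -
  have "(THE j'. j' < q \<and> col l A j' = col l A j) = j"
    using assms by (intro the_equality) (auto simp: inj_on_def)
  then show ?thesis unfolding rho_def using assms(2) by auto
qed

lemma rho_notin_colset: "u \<notin> colset l q A \<Longrightarrow> rho l q A lam u = 0"
  unfolding rho_def colset_def by auto

lemma rho_pos_iff:
  assumes "inj_on (col l A) {..<q}" and "\<And>j. j < q \<Longrightarrow> lam j > 0"
  shows "rho l q A lam u > 0 \<longleftrightarrow> u \<in> colset l q A"
proof (cases "u \<in> colset l q A")
  case True
  then obtain j where "j < q" "u = col l A j" unfolding colset_def by blast
  then show ?thesis using rho_col[OF assms(1)] assms(2) True by auto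
qed (simp add: rho_notin_colset)

lemma weight_above_pos_iff:
  assumes "\<And>j. j < q \<Longrightarrow> lam j > 0"
  shows "weight_above l q A lam v > 0 \<longleftrightarrow> (\<exists>j<q. v \<le> col l A j)"
proof
  assume "\<exists>j<q. v \<le> col l A j"
  then obtain j where "j < q" "v \<le> col l A j" by blast
  have "(if v \<le> col l A j then lam j else 0) \<le> weight_above l q A lam v"
    unfolding weight_above_def
    by (rule member_le_sum) (use \<open>j < q\<close> assms in \<open>auto intro: less_imp_le\<close>)
  then have "lam j \<le> weight_above l q A lam v"
    using \<open>v \<le> col l A j\<close> by simp
  with assms[OF \<open>j < q\<close>] show "weight_above l q A lam v > 0" by (rule less_le_trans)
next
  assume pos: "weight_above l q A lam v > 0"
  show "\<exists>j<q. v \<le> col l A j"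
  proof (rule ccontr)
    assume "\<not> (\<exists>j<q. v \<le> col l A j)"
    then have "weight_above l q A lam v = 0"
      unfolding weight_above_def by (auto intro!: sum.neutral)
    with pos show False by simp
  qed
qed

lemma weight_above_eq_sum_rho:
  assumes "distinct S" and "colset l q A \<subseteq> set S" and inj: "inj_on (col l A) {..<q}"
  shows "weight_above l q A lam v = (\<Sum>k<length S. if v \<le> S ! k then rho l q A lam (S ! k) else 0)"
proof -
  let ?f = "\<lambda>u. if v \<le> u then rho l q A lam u else 0"
  have "weight_above l q A lam v = (\<Sum>j<q. ?f (col l A j))"
    unfolding weight_above_def by (intro sum.cong) (auto simp: rho_col[OF inj])
  also have "\<dots> = sum ?f (colset l q A)"
    unfolding colset_def by (simp add: sum.reindex[OF inj])
  also have "\<dots> = sum ?f (set S)"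
    using assms(2) rho_notin_colset by (intro sum.mono_neutral_left) auto
  also have "\<dots> = (\<Sum>k<length S. ?f (S ! k))"
    using assms(1) by (simp add: sum.distinct_set_conv_list sum_list_sum_nth atLeast0LessThan)
  finally show ?thesis .
qed

lemma colset_subset_visited:
  assumes set_V: "set V = {(w, ph w) | w. w \<in> binvecs0 l \<and> ph w > 0}"
    and ph: "\<And>w. w \<in> binvecs0 l \<Longrightarrow> ph w = weight_above l q A lam w"
    and pos: "\<And>j. j < q \<Longrightarrow> lam j > 0"
    and binary: "\<And>i j. i < l \<Longrightarrow> j < q \<Longrightarrow> A i j \<in> {0, 1}"
    and nonzero: "\<And>j. j < q \<Longrightarrow> col l A j \<noteq> (\<lambda>_. 0)"
  shows "colset l q A \<subseteq> set (map fst V)"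
proof
  fix u assume "u \<in> colset l q A"
  then obtain j where j: "j < q" "u = col l A j" unfolding colset_def by blast
  then have "u \<in> binvecs0 l" using col_in_binvecs0 binary nonzero by blast
  moreover have "ph u > 0" using j \<open>u \<in> binvecs0 l\<close> by (auto simp: ph weight_above_pos_iff[OF pos])
  ultimately show "u \<in> set (map fst V)" using set_V by force
qed

lemma psi_vec_eq_rho:
  assumes "distinct (map fst V)"
    and weights: "\<And>p. p \<in> set V \<Longrightarrow> snd p = weight_above l q A lam (fst p)"
    and cols: "colset l q A \<subseteq> set (map fst V)" and inj: "inj_on (col l A) {..<q}"
  shows "psi_vec V = vec (length V) (\<lambda>k. rho l q A lam (fst (V ! k)))"
proof (rule psi_vec_eq[OF assms(1)])
  fix i assume "i < length V"
  then have "snd (V ! i) = weight_above l q A lam (fst (V ! i))"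
    using weights by simp
  also have "\<dots> = (\<Sum>k<length V.
      if fst (V ! i) \<le> map fst V ! k then rho l q A lam (map fst V ! k) else 0)"
    using weight_above_eq_sum_rho[OF assms(1) cols inj] by simp
  also have "\<dots> = (\<Sum>k<length V.
      if fst (V ! i) \<le> fst (V ! k) then vec (length V) (\<lambda>k. rho l q A lam (fst (V ! k))) $ k else 0)"
    by (intro sum.cong refl) simp
  finally show "snd (V ! i) = \<dots>" .
qed simp

lemma positive_psi_vec_eq_colset:
  assumes psi: "psi_vec V = vec (length V) (\<lambda>k. rho l q A lam (fst (V ! k)))"
    and cols: "colset l q A \<subseteq> set (map fst V)"
    and inj: "inj_on (col l A) {..<q}" and pos: "\<And>j. j < q \<Longrightarrow> lam j > 0"
  shows "{fst (V ! i) | i. i < length V \<and> psi_vec V $ i > 0} = colset l q A"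
proof
  show "{fst (V ! i) | i. i < length V \<and> psi_vec V $ i > 0} \<subseteq> colset l q A"
    using psi rho_pos_iff[OF inj pos] by auto
  show "colset l q A \<subseteq> {fst (V ! i) | i. i < length V \<and> psi_vec V $ i > 0}"
  proof
    fix u assume u: "u \<in> colset l q A"
    with cols have "u \<in> set (map fst V)" by blast
    then obtain i where i: "i < length V" "fst (V ! i) = u"
      unfolding in_set_conv_nth by auto
    with psi u rho_pos_iff[OF inj pos] have "psi_vec V $ i > 0" by auto
    with i show "u \<in> {fst (V ! i) | i. i < length V \<and> psi_vec V $ i > 0}" by blast
  qed
qed

lemma alg_result_weight_above:
  assumes V: "alg_result l ph V"
    and ph: "\<And>w. w \<in> binvecs0 l \<Longrightarrow> ph w = weight_above l q A lam w"
    and pos: "\<And>j. j < q \<Longrightarrow> lam j > 0"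
    and binary: "\<And>i j. i < l \<Longrightarrow> j < q \<Longrightarrow> A i j \<in> {0, 1}"
    and inj: "inj_on (col l A) {..<q}"
    and nonzero: "\<And>j. j < q \<Longrightarrow> col l A j \<noteq> (\<lambda>_. 0)"
  shows "set V = {(w, ph w) | w. w \<in> binvecs0 l \<and> ph w > 0}"
    and "{fst (V ! i) | i. i < length V \<and> psi_vec V $ i > 0} = colset l q A"
    and "\<forall>i < length V. psi_vec V $ i = rho l q A lam (fst (V ! i))"
proof -
  have down: "ph u > 0" if "u \<in> binvecs0 l" "w \<in> binvecs0 l" "u \<le> w" "ph w > 0" for u w
    using that by (auto simp: ph weight_above_pos_iff[OF pos] intro: order_trans)
  show set_V: "set V = {(w, ph w) | w. w \<in> binvecs0 l \<and> ph w > 0}"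
    using V down by (rule alg_result_set)
  have "distinct (map fst V)"
    using V down by (rule alg_result_set)
  moreover have "snd p = weight_above l q A lam (fst p)" if "p \<in> set V" for p
    using that set_V ph by auto
  moreover have cols: "colset l q A \<subseteq> set (map fst V)"
    using set_V ph pos binary nonzero by (rule colset_subset_visited)
  ultimately have psi: "psi_vec V = vec (length V) (\<lambda>k. rho l q A lam (fst (V ! k)))"
    using inj by (rule psi_vec_eq_rho)
  then show "{fst (V ! i) | i. i < length V \<and> psi_vec V $ i > 0} = colset l q A"
    using cols inj pos by (rule positive_psi_vec_eq_colset)
  from psi show "\<forall>i < length V. psi_vec V $ i = rho l q A lam (fst (V ! i))"
    by simp
qed

theorem proposition6:
  fixes M :: "'a measure" and X :: "nat \<Rightarrow> 'a \<Rightarrow> nat" and lam :: "nat \<Rightarrow> real"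
    and l q :: nat and A :: "nat \<Rightarrow> nat \<Rightarrow> nat"
  assumes "prob_space M"
    and "\<And>j. j < q \<Longrightarrow> X j \<in> measurable M (count_space UNIV)"
    and "\<And>j. j < q \<Longrightarrow> lam j > 0"
    and "\<And>j. j < q \<Longrightarrow> distr M (count_space UNIV) (X j) = measure_pmf (poisson_pmf (lam j))"
    and "prob_space.indep_vars M (\<lambda>_. count_space UNIV) X {..<q}"
    and "\<And>i j. i < l \<Longrightarrow> j < q \<Longrightarrow> A i j \<in> {0, 1}"
    and "inj_on (col l A) {..<q}"
    and "\<And>j. j < q \<Longrightarrow> col l A j \<noteq> (\<lambda>_. 0)"
  shows "(\<exists>V. alg_result l (phi M l (Yvec q A X)) V) \<and>
    (\<forall>V. alg_result l (phi M l (Yvec q A X)) V \<longrightarrow>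
       set V = {(w, phi M l (Yvec q A X) w) | w. w \<in> binvecs0 l \<and> phi M l (Yvec q A X) w > 0}
     \<and> {fst (V ! i) | i. i < length V \<and> psi_vec V $ i > 0} = colset l q A
     \<and> (\<forall>i < length V. fst (V ! i) \<in> colset l q A \<longrightarrow>
          psi_vec V $ i = rho l q A lam (fst (V ! i))))"
  using alg_result_exists
    alg_result_weight_above[OF _ phi_Yvec_Poisson[OF assms(1-6)] assms(3,6-8)]
  by blast

end
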